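(* Let $\alpha$ be an integer. For every integer $n\geq 0$ and every $\alpha\geq 2$, $$\overline{B}_{2^\alpha,3}(4n+2)\equiv 0 \pmod 4 \quad\text{and}\quad \overline{B}_{2^\alpha,3}(8n+5)\equiv 0\pmod 4,$$ and for every $n\ge 0$ and every $\alpha\geq 3$, $$\overline{B}_{2^\alpha,3}(8n+6)\equiv 0\pmod 8.$$
   Context: An overpartition of a nonnegative integer $n$ is a partition of $n$ (a non-increasing sequence of positive integers summing to $n$) in which the first occurrence of each distinct part may be overlined. For relatively prime integers $\ell_1,\ell_2>1$, an $(\ell_1,\ell_2)$-biregular overpartition of $n$ is an overpartition of $n$ none of whose parts is divisible by $\ell_1$ or by $\ell_2$, and $\overline{B}_{\ell_1,\ell_2}(n)$ denotes the number of such overpartitions ($\overline{B}_{\ell_1,\ell_2}(0)=1$). Equivalently, writing $f_k=(q^k;q^k)_\infty=\prod_{m\ge1}(1-q^{km})$ for $|q|<1$, $$\sum_{n\ge0}\overline{B}_{\ell_1,\ell_2}(n)q^n=\frac{f_2\, f_{\ell_1}^2\, f_{\ell_2}^2\, f_{2\ell_1\ell_2}}{f_1^2\, f_{2\ell_1}\, f_{2\ell_2}\, f_{\ell_1\ell_2}^2}.$$ *)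

theory Defs
  imports Main "HOL-Library.Multiset"
begin

text \<open>An overpartition of n is represented as a pair (P, S): P is the multiset of
  (positive) parts summing to n, and S is the set of distinct part sizes whose first
  occurrence is overlined (so S is a subset of the set of parts).\<close>
definition overpartitions :: "nat \<Rightarrow> (nat multiset \<times> nat set) set" where
  "overpartitions n = {(P, S). (\<forall>p\<in>#P. 0 < p) \<and> sum_mset P = n \<and> S \<subseteq> set_mset P}"

definition biregular_overpartitions :: "nat \<Rightarrow> nat \<Rightarrow> nat \<Rightarrow> (nat multiset \<times> nat set) set" where
  "biregular_overpartitions l1 l2 n =
     {(P, S) \<in> overpartitions n. \<forall>p\<in>#P. \<not> l1 dvd p \<and> \<not> l2 dvd p}"

definition Bbar :: "nat \<Rightarrow> nat \<Rightarrow> nat \<Rightarrow> nat" where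
  "Bbar l1 l2 n = card (biregular_overpartitions l1 l2 n)"

end

(* Overpartitions with parts in a set S are counted by F_S = prod_{k in S} (1 + q^k) / (1 - q^k)
   = prod_{k in S} (1 + 2 q^k / (1 - q^k)), and F_S F_T = F_(S Un T) for disjoint S and T. For
   coprime l1, l2 this gives F(q) F(q^(l1 l2)) = G(q) F(q^l1) F(q^l2), where F counts all
   overpartitions and G the (l1, l2)-biregular ones.

   Modulo 8 one has F = 1 + 2 H, where the n-th coefficient of H is d(n) + 2 t(n): d(n) is the
   number of divisors of n and t(n) the number of partitions of n into parts of exactly two
   different sizes. Since 1 + 2 y is invertible modulo 8, G is an explicit quadratic polynomial
   in H and its dilations H(q^m). Its coefficients are then settled by parity: d(n) is odd only
   for squares, d(2m) = 2 d(m) and t(2m) is even for odd m (conjugation of Ferrers diagrams has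
   no fixed point), and squares are 0, 1 or 4 modulo 8. *)

theory Submission
  imports Defs "HOL-Computational_Algebra.Formal_Power_Series" "HOL-Library.Numeral_Type"
    "HOL-Library.Disjoint_Sets"
begin

unbundle fps_syntax

section \<open>Overpartitions with parts in a given set\<close>

definition overpartitions_in :: "nat set \<Rightarrow> nat \<Rightarrow> (nat multiset \<times> nat set) set" where
  "overpartitions_in S n = {(P, T) \<in> overpartitions n. set_mset P \<subseteq> S}"

lemma member_le_sum_mset: "(p::nat) \<in># P \<Longrightarrow> p \<le> sum_mset P"
  by (auto dest!: multi_member_split)

lemma size_le_sum_mset: "(\<And>p. p \<in># P \<Longrightarrow> 0 < (p::nat)) \<Longrightarrow> size P \<le> sum_mset P"
proof (induction P)
  case (add x P)
  then have "0 < x" "size P \<le> sum_mset P" by simp_all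
  then show ?case by simp
qed simp

lemma finite_overpartitions: "finite (overpartitions n)"
proof -
  have "overpartitions n \<subseteq> (\<Union>k\<le>n. multisets_of_size {1..n} k) \<times> Pow {1..n}"
  proof (clarify)
    fix P T assume "(P, T) \<in> overpartitions n"
    then have pos: "\<And>p. p \<in># P \<Longrightarrow> 0 < p" and sum: "sum_mset P = n" and T: "T \<subseteq> set_mset P"
      by (auto simp: overpartitions_def)
    have parts: "set_mset P \<subseteq> {1..n}"
      using pos member_le_sum_mset sum by (fastforce simp: Suc_le_eq)
    moreover have "size P \<le> n"
      using size_le_sum_mset[of P] pos sum by simp
    ultimately show "P \<in> (\<Union>k\<le>n. multisets_of_size {1..n} k) \<and> T \<in> Pow {1..n}"
      using T by (auto simp: multisets_of_size_def)
  qed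
  then show ?thesis
    by (rule finite_subset) auto
qed

lemma finite_overpartitions_in: "finite (overpartitions_in S n)"
  by (rule finite_subset[OF _ finite_overpartitions[of n]]) (auto simp: overpartitions_in_def)

lemma biregular_overpartitions_eq:
  "biregular_overpartitions l1 l2 n = overpartitions_in {k. \<not> l1 dvd k \<and> \<not> l2 dvd k} n"
  by (auto simp: biregular_overpartitions_def overpartitions_in_def)

lemma overpartitions_in_atMost:
  "overpartitions_in S n = overpartitions_in (S \<inter> {..n}) n"
  by (auto simp: overpartitions_in_def overpartitions_def dest: member_le_sum_mset)

lemma filter_mset_disjoint_Un:
  assumes "set_mset P \<subseteq> S1 \<union> S2" "S1 \<inter> S2 = {}"
  shows "{#p \<in># P. p \<in> S1#} + {#p \<in># P. p \<in> S2#} = P"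
  using assms by (auto simp: multiset_eq_iff not_in_iff[symmetric])

lemma bij_betw_overpartitions_in_Un:
  assumes "S1 \<inter> S2 = {}"
  shows "bij_betw (\<lambda>(P, T). (sum_mset {#p \<in># P. p \<in> S1#},
      ({#p \<in># P. p \<in> S1#}, T \<inter> S1), ({#p \<in># P. p \<in> S2#}, T \<inter> S2)))
    (overpartitions_in (S1 \<union> S2) n)
    (SIGMA i:{..n}. overpartitions_in S1 i \<times> overpartitions_in S2 (n - i))"
    (is "bij_betw ?separate ?A ?Z")
proof (rule bij_betw_byWitness[where f' = "\<lambda>(i, (P1, T1), (P2, T2)). (P1 + P2, T1 \<union> T2)"])
  show "\<forall>a\<in>?A. (\<lambda>(i, (P1, T1), (P2, T2)). (P1 + P2, T1 \<union> T2)) (?separate a) = a"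
  proof
    fix a assume "a \<in> ?A"
    moreover obtain P T where a: "a = (P, T)"
      by fastforce
    ultimately have "set_mset P \<subseteq> S1 \<union> S2" "T \<subseteq> set_mset P"
      by (auto simp: overpartitions_in_def overpartitions_def)
    then have "{#p \<in># P. p \<in> S1#} + {#p \<in># P. p \<in> S2#} = P" "T \<inter> S1 \<union> T \<inter> S2 = T"
      using assms filter_mset_disjoint_Un by auto
    then show "(\<lambda>(i, (P1, T1), (P2, T2)). (P1 + P2, T1 \<union> T2)) (?separate a) = a"
      by (simp add: a)
  qed
  show "\<forall>z\<in>?Z. ?separate ((\<lambda>(i, (P1, T1), (P2, T2)). (P1 + P2, T1 \<union> T2)) z) = z"
  proof
    fix z assume "z \<in> ?Z"
    moreover obtain i P1 T1 P2 T2 where z: "z = (i, (P1, T1), (P2, T2))"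
      by (metis prod.collapse)
    ultimately have "set_mset P1 \<subseteq> S1" "set_mset P2 \<subseteq> S2" "T1 \<subseteq> set_mset P1"
      "T2 \<subseteq> set_mset P2" "sum_mset P1 = i"
      by (auto simp: overpartitions_in_def overpartitions_def)
    then have "{#p \<in># P1 + P2. p \<in> S1#} = P1" "{#p \<in># P1 + P2. p \<in> S2#} = P2"
      "(T1 \<union> T2) \<inter> S1 = T1" "(T1 \<union> T2) \<inter> S2 = T2" "sum_mset P1 = i"
      using assms by (auto simp: multiset_eq_iff not_in_iff[symmetric])
    then show "?separate ((\<lambda>(i, (P1, T1), (P2, T2)). (P1 + P2, T1 \<union> T2)) z) = z"
      by (simp add: z)
  qed
  show "?separate ` ?A \<subseteq> ?Z"
  proof
    fix y assume "y \<in> ?separate ` ?A"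
    then obtain P T where y: "y = ?separate (P, T)" and "(P, T) \<in> ?A"
      by force
    then have "\<forall>p\<in>#P. 0 < p" "sum_mset P = n" "T \<subseteq> set_mset P" "set_mset P \<subseteq> S1 \<union> S2"
      by (auto simp: overpartitions_in_def overpartitions_def)
    moreover from this have "sum_mset {#p \<in># P. p \<in> S1#} + sum_mset {#p \<in># P. p \<in> S2#} = n"
      using assms filter_mset_disjoint_Un by (metis sum_mset.union)
    ultimately show "y \<in> ?Z"
      by (auto simp: y overpartitions_in_def overpartitions_def)
  qed
  show "(\<lambda>(i, (P1, T1), (P2, T2)). (P1 + P2, T1 \<union> T2)) ` ?Z \<subseteq> ?A"
    by (auto simp: overpartitions_in_def overpartitions_def)
qed

lemma card_overpartitions_in_Un:
  assumes "S1 \<inter> S2 = {}"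
  shows "card (overpartitions_in (S1 \<union> S2) n)
    = (\<Sum>i\<le>n. card (overpartitions_in S1 i) * card (overpartitions_in S2 (n - i)))"
  using bij_betw_same_card[OF bij_betw_overpartitions_in_Un[OF assms]]
  by (simp add: card_SigmaI finite_overpartitions_in card_cartesian_product)

lemma image_mset_mult_div_eq:
  fixes m :: nat
  assumes "\<forall>p\<in>#P. m dvd p"
  shows "image_mset ((*) m) (image_mset (\<lambda>p. p div m) P) = P"
proof -
  have "image_mset ((*) m) (image_mset (\<lambda>p. p div m) P) = image_mset id P"
    unfolding image_mset.compositionality by (rule image_mset_cong) (use assms in auto)
  then show ?thesis by simp
qed

lemma sum_mset_image_mult: "sum_mset (image_mset ((*) m) P) = m * sum_mset (P :: nat multiset)"
  by (induction P) (simp_all add: algebra_simps)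

lemma overpartitions_in_image_mult_dvd:
  fixes m :: nat
  assumes "(P, T) \<in> overpartitions_in ((*) m ` S) n"
  shows "\<forall>p\<in>#P. m dvd p" "\<forall>p\<in>T. m dvd p" "n = m * sum_mset (image_mset (\<lambda>p. p div m) P)"
proof -
  show dvd: "\<forall>p\<in>#P. m dvd p"
    using assms by (auto simp: overpartitions_in_def)
  then show "\<forall>p\<in>T. m dvd p"
    using assms by (auto simp: overpartitions_in_def overpartitions_def)
  have "n = sum_mset (image_mset ((*) m) (image_mset (\<lambda>p. p div m) P))"
    using assms dvd by (simp only: image_mset_mult_div_eq) (simp add: overpartitions_in_def overpartitions_def)
  then show "n = m * sum_mset (image_mset (\<lambda>p. p div m) P)"
    by (simp only: sum_mset_image_mult)
qed

lemma scale_mem_overpartitions_in: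
  fixes m :: nat
  assumes "(P, T) \<in> overpartitions_in S n" "0 < m"
  shows "(image_mset ((*) m) P, (*) m ` T) \<in> overpartitions_in ((*) m ` S) (m * n)"
proof -
  have "\<forall>p\<in>#P. 0 < p" "sum_mset P = n" "T \<subseteq> set_mset P" "set_mset P \<subseteq> S"
    using assms(1) by (auto simp: overpartitions_in_def overpartitions_def)
  then show ?thesis
    using assms(2) image_mono[of T "set_mset P" "(*) m"] image_mono[of "set_mset P" S "(*) m"]
    by (simp add: overpartitions_in_def overpartitions_def sum_mset_image_mult)
qed

lemma unscale_mem_overpartitions_in:
  fixes m :: nat
  assumes "(P, T) \<in> overpartitions_in ((*) m ` S) (m * n)" "0 < m"
  shows "(image_mset (\<lambda>p. p div m) P, (\<lambda>p. p div m) ` T) \<in> overpartitions_in S n"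
proof -
  have pos: "\<forall>p\<in>#P. 0 < p" and T: "T \<subseteq> set_mset P" and P: "set_mset P \<subseteq> (*) m ` S"
    using assms(1) by (auto simp: overpartitions_in_def overpartitions_def)
  note dvd = overpartitions_in_image_mult_dvd[OF assms(1)]
  have "0 < p div m" if p: "p \<in># P" for p
  proof -
    obtain q where "p = m * q"
      using dvd(1) p by (auto elim: dvdE)
    then show ?thesis
      using pos p assms(2) by auto
  qed
  moreover have "sum_mset (image_mset (\<lambda>p. p div m) P) = n"
    using dvd(3) assms(2) by simp
  moreover have "(\<lambda>p. p div m) ` T \<subseteq> set_mset (image_mset (\<lambda>p. p div m) P)"
    using image_mono[OF T] by (simp only: set_image_mset)
  moreover have "set_mset (image_mset (\<lambda>p. p div m) P) \<subseteq> S"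
    using P assms(2) by auto
  ultimately show ?thesis
    by (simp add: overpartitions_in_def overpartitions_def)
qed

lemma bij_betw_overpartitions_in_image_mult:
  fixes m :: nat
  assumes "0 < m"
  shows "bij_betw (\<lambda>(P, T). (image_mset ((*) m) P, (*) m ` T))
    (overpartitions_in S n) (overpartitions_in ((*) m ` S) (m * n))"
proof (rule bij_betw_byWitness[where f' = "\<lambda>(P, T). (image_mset (\<lambda>p. p div m) P, (\<lambda>p. p div m) ` T)"])
  show "\<forall>a\<in>overpartitions_in ((*) m ` S) (m * n).
      (\<lambda>(P, T). (image_mset ((*) m) P, (*) m ` T))
        ((\<lambda>(P, T). (image_mset (\<lambda>p. p div m) P, (\<lambda>p. p div m) ` T)) a) = a"
  proof
    fix a assume "a \<in> overpartitions_in ((*) m ` S) (m * n)"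
    moreover obtain P T where a: "a = (P, T)"
      by fastforce
    ultimately have dvd: "\<forall>p\<in>#P. m dvd p" "\<forall>p\<in>T. m dvd p"
      using overpartitions_in_image_mult_dvd by blast+
    have "(*) m ` (\<lambda>p. p div m) ` T = id ` T"
      unfolding image_image by (rule image_cong) (use dvd in auto)
    then show "(\<lambda>(P, T). (image_mset ((*) m) P, (*) m ` T))
        ((\<lambda>(P, T). (image_mset (\<lambda>p. p div m) P, (\<lambda>p. p div m) ` T)) a) = a"
      using dvd by (simp add: a image_mset_mult_div_eq)
  qed
qed (use assms in \<open>auto simp: image_mset.compositionality image_image comp_def
    intro: scale_mem_overpartitions_in unscale_mem_overpartitions_in\<close>)

lemma card_overpartitions_in_image_mult:
  fixes m :: nat
  assumes "0 < m"
  shows "card (overpartitions_in ((*) m ` S) n)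
    = (if m dvd n then card (overpartitions_in S (n div m)) else 0)"
proof (cases "m dvd n")
  case True
  then show ?thesis
    using bij_betw_same_card[OF bij_betw_overpartitions_in_image_mult[OF assms, of S "n div m"]]
    by simp
next
  case False
  then have "overpartitions_in ((*) m ` S) n = {}"
    using overpartitions_in_image_mult_dvd(3) by fastforce
  then show ?thesis
    using False by simp
qed

lemma card_overpartitions_in_singleton:
  "card (overpartitions_in {k} n) = (if n = 0 then 1 else if k dvd n then 2 else 0)"
proof -
  have "overpartitions_in {k} n
    = (if n = 0 then {({#}, {})} else if k dvd n
       then {(replicate_mset (n div k) k, {}), (replicate_mset (n div k) k, {k})} else {})"
  proof (intro set_eqI iffI)
    fix a assume "a \<in> overpartitions_in {k} n"
    then obtain P T where a: "a = (P, T)" and pos: "\<forall>p\<in>#P. 0 < p" and "sum_mset P = n"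
      and T: "T \<subseteq> set_mset P" and P: "set_mset P \<subseteq> {k}"
      by (auto simp: overpartitions_in_def overpartitions_def)
    then have P_eq: "P = replicate_mset (size P) k" and n_eq: "n = size P * k"
      by (metis set_mset_subset_singletonD sum_mset_replicate_mset of_nat_id)+
    show "a \<in> (if n = 0 then {({#}, {})} else if k dvd n
       then {(replicate_mset (n div k) k, {}), (replicate_mset (n div k) k, {k})} else {})"
    proof (cases "P = {#}")
      case True
      then show ?thesis using a T n_eq by auto
    next
      case False
      then obtain p where "p \<in># P"
        by (blast elim: multiset_nonemptyE)
      then have "0 < k" "0 < size P"
        using False pos P by (auto simp: nonempty_has_size)
      then show ?thesis
        using a T P P_eq n_eq by (auto simp: subset_singleton_iff)
    qed
  next
    fix a assume "a \<in> (if n = 0 then {({#}, {})} else if k dvd n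
       then {(replicate_mset (n div k) k, {}), (replicate_mset (n div k) k, {k})} else {})"
    then show "a \<in> overpartitions_in {k} n"
      by (auto simp: overpartitions_in_def overpartitions_def split: if_splits)
  qed
  then show ?thesis
    by (auto simp: card_insert_if)
qed

section \<open>Generating series\<close>

lemma fps_numeral_mult_nth [simp]: "(numeral w * f :: 'a::comm_semiring_1 fps) $ n = numeral w * f $ n"
  by (simp only: numeral_fps_const fps_mult_left_const_nth)

definition fps_dilate :: "nat \<Rightarrow> 'a::zero fps \<Rightarrow> 'a fps" where
  "fps_dilate m f = Abs_fps (\<lambda>n. if m dvd n then f $ (n div m) else 0)"

lemma fps_dilate_nth: "fps_dilate m f $ n = (if m dvd n then f $ (n div m) else 0)"
  by (simp add: fps_dilate_def)

lemma fps_dilate_Suc_0 [simp]: "fps_dilate (Suc 0) f = f"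
  by (rule fps_ext) (simp add: fps_dilate_nth)

lemma fps_dilate_one_plus_two:
  assumes "0 < m"
  shows "fps_dilate m (1 + 2 * f) = 1 + 2 * fps_dilate m (f :: 'a::comm_semiring_1 fps)"
  by (rule fps_ext) (use assms in \<open>auto simp: fps_dilate_nth elim!: dvdE\<close>)

(* For k > 0, fps_multiples k is q^k / (1 - q^k) and 1 + 2 * fps_multiples k = (1 + q^k) / (1 - q^k). *)
definition fps_multiples :: "nat \<Rightarrow> 'a::comm_semiring_1 fps" where
  "fps_multiples k = Abs_fps (\<lambda>n. of_bool (0 < n \<and> k dvd n))"

lemma fps_multiples_nth: "fps_multiples k $ n = of_bool (0 < n \<and> k dvd n)"
  by (simp add: fps_multiples_def)

lemma fps_multiples_0: "fps_multiples 0 = 0"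
  by (rule fps_ext) (auto simp: fps_multiples_nth)

definition overpartition_series :: "nat set \<Rightarrow> 'a::comm_semiring_1 fps" where
  "overpartition_series S = Abs_fps (\<lambda>n. of_nat (card (overpartitions_in S n)))"

lemma overpartition_series_nth [simp]:
  "overpartition_series S $ n = of_nat (card (overpartitions_in S n))"
  by (simp add: overpartition_series_def)

lemma overpartition_series_Un:
  assumes "S1 \<inter> S2 = {}"
  shows "overpartition_series (S1 \<union> S2)
    = overpartition_series S1 * (overpartition_series S2 :: 'a::comm_semiring_1 fps)"
  by (rule fps_ext) (simp add: card_overpartitions_in_Un[OF assms] fps_mult_nth atLeast0AtMost)

lemma overpartition_series_empty: "overpartition_series {} = 1"
proof (rule fps_ext)
  fix n
  have "overpartitions_in {} n = (if n = 0 then {({#}, {})} else {})"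
    by (auto simp: overpartitions_in_def overpartitions_def)
  then show "overpartition_series {} $ n = 1 $ n"
    by simp
qed

lemma overpartition_series_singleton:
  "overpartition_series {k} = 1 + 2 * (fps_multiples k :: 'a::comm_semiring_1 fps)"
  by (rule fps_ext) (auto simp: card_overpartitions_in_singleton fps_multiples_nth)

lemma overpartition_series_lessThan:
  "overpartition_series {..<n} = (\<Prod>k<n. 1 + 2 * (fps_multiples k :: 'a::comm_semiring_1 fps))"
proof (induction n)
  case (Suc n)
  have "(overpartition_series {..<Suc n} :: 'a fps) = overpartition_series ({..<n} \<union> {n})"
    by (rule arg_cong[where f = overpartition_series]) auto
  also have "\<dots> = overpartition_series {..<n} * overpartition_series {n}"
    by (rule overpartition_series_Un) auto
  finally show ?case
    by (simp add: Suc.IH overpartition_series_singleton mult.commute)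
qed (simp add: overpartition_series_empty)

lemma overpartition_series_multiples:
  assumes "0 < m"
  shows "overpartition_series {k. m dvd k} = fps_dilate m (overpartition_series UNIV)"
proof -
  have "{k. m dvd k} = (*) m ` UNIV"
    by (auto elim: dvdE)
  then show ?thesis
    by (intro fps_ext) (simp add: card_overpartitions_in_image_mult[OF assms] fps_dilate_nth)
qed

lemma overpartition_series_biregular:
  fixes l1 l2 :: nat
  assumes "coprime l1 l2" "0 < l1" "0 < l2"
  defines "F \<equiv> overpartition_series UNIV :: 'a::comm_semiring_1 fps"
  shows "F * fps_dilate (l1 * l2) F
    = overpartition_series {k. \<not> l1 dvd k \<and> \<not> l2 dvd k} * fps_dilate l1 F * fps_dilate l2 F"
proof -
  define A where "A = {k. \<not> l1 dvd k \<and> \<not> l2 dvd k}"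
  define E where "E = {k. l2 dvd k \<and> \<not> l1 dvd k}"
  have both: "l1 * l2 dvd k \<longleftrightarrow> l1 dvd k \<and> l2 dvd k" for k
    using assms(1) by (auto simp: divides_mult dest: dvd_mult_left dvd_mult_right)
  have "F = overpartition_series (A \<union> ({k. l1 dvd k} \<union> E))"
    unfolding F_def by (rule arg_cong[where f = overpartition_series]) (auto simp: A_def E_def)
  also have "\<dots> = overpartition_series A * overpartition_series ({k. l1 dvd k} \<union> E)"
    by (rule overpartition_series_Un) (auto simp: A_def E_def)
  also have "overpartition_series ({k. l1 dvd k} \<union> E)
      = overpartition_series {k. l1 dvd k} * (overpartition_series E :: 'a fps)"
    by (rule overpartition_series_Un) (auto simp: E_def)
  finally have "F * overpartition_series {k. l1 * l2 dvd k}
      = overpartition_series A * overpartition_series {k. l1 dvd k}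
        * overpartition_series (E \<union> {k. l1 * l2 dvd k})"
    by (subst overpartition_series_Un) (auto simp: E_def both mult.assoc)
  also have "E \<union> {k. l1 * l2 dvd k} = {k. l2 dvd k}"
    by (auto simp: E_def both)
  finally show ?thesis
    using assms by (simp add: F_def A_def overpartition_series_multiples)
qed

section \<open>Arithmetic modulo 8\<close>

lemma mult_one_plus_two_mod8:
  fixes s t p r :: "'a::comm_ring_1"
  assumes "(8::'a) = 0"
  shows "(1 + 2 * s + 4 * p) * (1 + 2 * t + 4 * r) = 1 + 2 * (s + t) + 4 * (p + r + s * t)"
proof -
  have "(1 + 2 * s + 4 * p) * (1 + 2 * t + 4 * r)
      = 1 + 2 * (s + t) + 4 * (p + r + s * t) + 8 * (s * r + p * t + 2 * p * r)"
    by (simp add: algebra_simps)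
  then show ?thesis
    using assms by simp
qed

lemma prod_one_plus_two_mod8:
  fixes f :: "nat \<Rightarrow> 'a::comm_ring_1"
  assumes "(8::'a) = 0"
  shows "(\<Prod>k<n. 1 + 2 * f k) = 1 + 2 * (\<Sum>k<n. f k) + 4 * (\<Sum>l<n. \<Sum>k<l. f k * f l)"
proof (induction n)
  case (Suc n)
  have "(\<Prod>k<Suc n. 1 + 2 * f k) = (\<Prod>k<n. 1 + 2 * f k) * (1 + 2 * f n + 4 * 0)"
    by simp
  also have "\<dots> = (1 + 2 * (\<Sum>k<n. f k) + 4 * (\<Sum>l<n. \<Sum>k<l. f k * f l)) * (1 + 2 * f n + 4 * 0)"
    by (simp only: Suc.IH)
  also have "\<dots> = 1 + 2 * (\<Sum>k<Suc n. f k) + 4 * (\<Sum>l<Suc n. \<Sum>k<l. f k * f l)"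
    by (subst mult_one_plus_two_mod8[OF assms]) (simp add: sum_distrib_right)
  finally show ?case .
qed simp

(* Modulo 8 the inverse of 1 + 2 u is 1 - 2 u + 4 u^2. *)
lemma quotient_one_plus_two_mod8:
  fixes g y z u v :: "'a::comm_ring_1"
  assumes "(8::'a) = 0" and "g * (1 + 2 * u) * (1 + 2 * v) = (1 + 2 * y) * (1 + 2 * z)"
  shows "g = 1 + 2 * (y + z - u - v)
    + 4 * (y * z + y * u + y * v + z * u + z * v + u * v + u * u + v * v)"
proof -
  have inverse: "(1 + 2 * w) * (1 + 2 * (- w) + 4 * (w * w)) = 1" for w :: 'a
  proof -
    have "(1 + 2 * w) * (1 + 2 * (- w) + 4 * (w * w)) = 1 + 8 * (w * w * w)"
      by (simp add: algebra_simps)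
    then show ?thesis
      using assms(1) by simp
  qed
  have "g = g * ((1 + 2 * u) * (1 + 2 * (- u) + 4 * (u * u)))
      * ((1 + 2 * v) * (1 + 2 * (- v) + 4 * (v * v)))"
    by (simp only: inverse mult_1_right)
  also have "\<dots> = (g * (1 + 2 * u) * (1 + 2 * v))
      * (1 + 2 * (- u) + 4 * (u * u)) * (1 + 2 * (- v) + 4 * (v * v))"
    by (simp only: ac_simps)
  also have "g * (1 + 2 * u) * (1 + 2 * v) = 1 + 2 * (y + z) + 4 * (y * z)"
    unfolding assms(2) by (simp add: algebra_simps)
  also have "(1 + 2 * (y + z) + 4 * (y * z)) * (1 + 2 * (- u) + 4 * (u * u))
      * (1 + 2 * (- v) + 4 * (v * v))
    = 1 + 2 * (y + z + - u + - v)
      + 4 * (y * z + u * u + (y + z) * - u + v * v + (y + z + - u) * - v)"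
    by (simp only: mult_one_plus_two_mod8[OF assms(1)])
  also have "4 * (y * z + u * u + (y + z) * - u + v * v + (y + z + - u) * - v)
    = 4 * (y * z + y * u + y * v + z * u + z * v + u * v + u * u + v * v)
      - 8 * (y * u + z * u + y * v + z * v)"
    by (simp add: algebra_simps)
  finally show ?thesis
    using assms(1) by simp
qed

lemma eight_eq_0_mod8 [simp]: "(8 :: 8) = 0"
  by simp

lemma eight_fps_eq_0_mod8 [simp]: "(8 :: 8 fps) = 0"
  by (simp add: numeral_fps_const)

lemma of_nat_eq_0_mod8_iff: "(of_nat n :: 8) = 0 \<longleftrightarrow> 8 dvd n"
  using of_nat_eq_0_iff_char_dvd[where 'a = 8] by simp

lemma four_of_nat_even_mod8:
  assumes "even m"
  shows "4 * (of_nat m :: 8) = 0"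
proof -
  obtain c where "m = 2 * c"
    using assms ..
  then have "4 * (of_nat m :: 8) = of_nat (8 * c)"
    by simp
  also have "\<dots> = 0"
    by (simp only: of_nat_eq_0_mod8_iff) simp
  finally show ?thesis .
qed

lemma four_of_nat_square_mod8: "4 * ((of_nat m :: 8) * of_nat m) = 4 * of_nat m"
proof -
  have "even (m * (m - 1))"
    by auto
  then obtain c where c: "m * (m - 1) = 2 * c" ..
  have "4 * (m * m) = 4 * m + 8 * c"
  proof (cases m)
    case (Suc r)
    then show ?thesis
      using c by (simp add: algebra_simps)
  qed (use c in simp)
  then have "(of_nat (4 * (m * m)) :: 8) = of_nat (4 * m) + of_nat (8 * c)"
    by (simp only: of_nat_add)
  then show ?thesis
    by (simp only: of_nat_mult of_nat_numeral) simp
qed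

lemma square_mod_8: "(s * s) mod 8 \<in> {0, 1, 4 :: nat}"
proof -
  have "(s * s) mod 8 = ((s mod 8) * (s mod 8)) mod 8"
    by (simp add: mod_mult_eq)
  moreover have "s mod 8 \<in> {0, 1, 2, 3, 4, 5, 6, 7}"
    by auto
  ultimately show ?thesis
    by auto
qed

lemma not_eq_mult_square_mod8:
  fixes n e s :: nat
  assumes "n mod 8 \<in> {2, 5, 6}" "e mod 8 \<in> {0, 1, 3, 4}"
  shows "n \<noteq> e * (s * s)"
proof
  assume "n = e * (s * s)"
  then have "n mod 8 = ((e mod 8) * ((s * s) mod 8)) mod 8"
    by (simp add: mod_mult_eq)
  with assms square_mod_8[of s] show False
    by auto
qed

lemma not_eq_mult_squares_add_mod8:
  fixes n e1 e2 s t :: nat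
  assumes "n mod 8 = 6" "e1 mod 8 \<in> {0, 1}" "e2 mod 8 \<in> {0, 3}"
  shows "n \<noteq> e1 * (s * s) + e2 * (t * t)"
proof
  assume "n = e1 * (s * s) + e2 * (t * t)"
  moreover have "((e1 mod 8) * ((s * s) mod 8) + (e2 mod 8) * ((t * t) mod 8)) mod 8
      = (e1 * (s * s) + e2 * (t * t)) mod 8"
    by (intro mod_add_cong mod_mult_eq)
  ultimately have "n mod 8 = ((e1 mod 8) * ((s * s) mod 8) + (e2 mod 8) * ((t * t) mod 8)) mod 8"
    by simp
  with assms square_mod_8[of s] square_mod_8[of t] show False
    by auto
qed

lemma fps_square_nth_double:
  fixes f :: "'a::comm_semiring_1 fps"
  shows "(f * f) $ (2 * k) = f $ k * f $ k + 2 * (\<Sum>i<k. f $ i * f $ (2 * k - i))"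
proof -
  define g where "g i = f $ i * f $ (2 * k - i)" for i
  have "(f * f) $ (2 * k) = sum g {0..2 * k}"
    by (simp add: fps_mult_nth g_def)
  also have "{0..2 * k} = {..<k} \<union> ({k} \<union> {k<..2 * k})"
    by auto
  also have "sum g \<dots> = sum g {..<k} + sum g ({k} \<union> {k<..2 * k})"
    by (rule sum.union_disjoint) auto
  also have "sum g ({k} \<union> {k<..2 * k}) = g k + sum g {k<..2 * k}"
    by simp
  also have "sum g {k<..2 * k} = sum g {..<k}"
  proof (rule sum.reindex_bij_witness[of _ "\<lambda>i. 2 * k - i" "\<lambda>i. 2 * k - i"])
    show "g (2 * k - i) = g i" if "i \<in> {k<..2 * k}" for i
      using that by (simp add: g_def mult.commute)
  qed auto
  finally show ?thesis
    by (simp add: g_def mult_2 add_ac)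
qed

lemma four_fps_square_nth_double:
  "4 * (f * f :: 8 fps) $ (2 * k) = 4 * (f $ k * f $ k)"
proof -
  have "4 * (f * f :: 8 fps) $ (2 * k) = 4 * (f $ k * f $ k) + 8 * (\<Sum>i<k. f $ i * f $ (2 * k - i))"
    by (simp only: fps_square_nth_double) (simp add: algebra_simps)
  then show ?thesis
    by simp
qed

section \<open>Divisors and partitions with two part sizes\<close>

lemma even_card_involution:
  assumes "\<And>x. x \<in> A \<Longrightarrow> h x \<in> A" "\<And>x. x \<in> A \<Longrightarrow> h (h x) = x" "\<And>x. x \<in> A \<Longrightarrow> h x \<noteq> x"
  shows "even (card A)"
proof -
  have "(\<Sum>x\<in>A. 1 :: 2) = 0"
    by (rule sum_involution_eq_0[where h = h]) (use assms in simp_all)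
  then have "(of_nat (card A) :: 2) = 0"
    by simp
  then show ?thesis
    using of_nat_eq_0_iff_char_dvd[where 'a = 2] by simp
qed

(* divisor_count 0 = 0, as {d. d dvd 0} is infinite. *)
definition divisor_count :: "nat \<Rightarrow> nat" where
  "divisor_count n = card {d. d dvd n}"

lemma odd_divisor_count_imp_square:
  assumes "odd (divisor_count n)"
  shows "\<exists>s. n = s * s"
proof (rule ccontr)
  assume nonsquare: "\<nexists>s. n = s * s"
  then have "0 < n"
    by (metis mult_0 neq0_conv)
  have "even (card {d. d dvd n})"
  proof (rule even_card_involution[where h = "\<lambda>d. n div d"])
    fix d assume "d \<in> {d. d dvd n}"
    then obtain e where n: "n = d * e"
      by blast
    then have "0 < d" "0 < e"
      using \<open>0 < n\<close> by auto
    then show "n div d \<in> {d. d dvd n}" "n div (n div d) = d" "n div d \<noteq> d"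
      using n nonsquare by auto
  qed
  with assms show False
    by (simp add: divisor_count_def)
qed

lemma divisor_count_double:
  assumes "odd t"
  shows "divisor_count (2 * t) = 2 * divisor_count t"
proof -
  have "{d. d dvd 2 * t} = {d. d dvd t} \<union> (*) 2 ` {d. d dvd t}"
  proof (intro set_eqI iffI)
    fix d assume d: "d \<in> {d. d dvd 2 * t}"
    show "d \<in> {d. d dvd t} \<union> (*) 2 ` {d. d dvd t}"
    proof (cases "even d")
      case True
      then show ?thesis
        using d by (auto elim!: evenE)
    next
      case False
      then have "coprime d 2"
        by simp
      then show ?thesis
        using d by (simp add: coprime_dvd_mult_right_iff)
    qed
  qed auto
  moreover have "{d. d dvd t} \<inter> (*) 2 ` {d. d dvd t} = {}"
    using assms by (auto dest: dvd_mult_left)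
  moreover have "0 < t"
    using assms by (auto intro: gr0I)
  moreover have "card ((*) 2 ` {d. d dvd t}) = card {d. d dvd t}"
    by (rule card_image) (simp add: inj_on_def)
  ultimately show ?thesis
    by (simp add: divisor_count_def card_Un_disjoint)
qed

(* (k, l, p, q) stands for the partition of n into p parts k and q parts l. *)
definition two_size_partitions :: "nat \<Rightarrow> (nat \<times> nat \<times> nat \<times> nat) set" where
  "two_size_partitions n = {(k, l, p, q). 0 < k \<and> k < l \<and> 0 < p \<and> 0 < q \<and> k * p + l * q = n}"

(* The involution is conjugation of Ferrers diagrams; a fixed point would give 2 t = k (k + 2 p). *)
lemma even_card_two_size_partitions:
  assumes "odd t"
  shows "even (card (two_size_partitions (2 * t)))"
proof (rule even_card_involution[where h = "\<lambda>(k, l, p, q). (q, p + q, l - k, k)"])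
  fix x assume "x \<in> two_size_partitions (2 * t)"
  then obtain k l p q where x: "x = (k, l, p, q)" and pos: "0 < k" "k < l" "0 < p" "0 < q"
    and n: "p * k + q * l = 2 * t"
    by (auto simp: two_size_partitions_def mult.commute)
  have "q * (l - k) = q * l - q * k" "q * k \<le> q * l" "(p + q) * k = p * k + q * k"
    using \<open>k < l\<close> by (simp_all add: diff_mult_distrib2 distrib_right)
  then have "q * (l - k) + (p + q) * k = 2 * t"
    using n by linarith
  then show "(\<lambda>(k, l, p, q). (q, p + q, l - k, k)) x \<in> two_size_partitions (2 * t)"
    using x pos by (simp add: two_size_partitions_def)
  show "(\<lambda>(k, l, p, q). (q, p + q, l - k, k)) ((\<lambda>(k, l, p, q). (q, p + q, l - k, k)) x) = x"
    using x \<open>k < l\<close> by simp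
  show "(\<lambda>(k, l, p, q). (q, p + q, l - k, k)) x \<noteq> x"
  proof
    assume "(\<lambda>(k, l, p, q). (q, p + q, l - k, k)) x = x"
    then have fixed: "(q, p + q, l - k, k) = (k, l, p, q)"
      by (simp only: x prod.case)
    have "q = k" "p + q = l"
      using arg_cong[OF fixed, of fst] arg_cong[OF fixed, of "fst \<circ> snd"] by simp_all
    then have "2 * t = p * k + k * (p + k)"
      using n by simp
    then have self_conjugate: "2 * t = k * (k + 2 * p)"
      by (simp add: algebra_simps)
    then have "even (k * (k + 2 * p))"
      by (simp flip: self_conjugate)
    then have "even k"
      by simp
    then obtain j where "k = 2 * j"
      by (rule evenE)
    then have "t = j * (2 * j + 2 * p)"
      using self_conjugate by (simp add: mult.assoc)
    with assms show False
      by simp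
  qed
qed

lemma sum_fps_multiples_nth:
  "(\<Sum>k<Suc n. fps_multiples k) $ n = (of_nat (divisor_count n) :: 'a::comm_semiring_1)"
proof -
  have "(\<Sum>k<Suc n. fps_multiples k) $ n = (\<Sum>k<Suc n. of_bool (0 < n \<and> k dvd n) :: 'a)"
    by (simp add: fps_sum_nth fps_multiples_nth)
  also have "\<dots> = of_nat (card ({..<Suc n} \<inter> {k. 0 < n \<and> k dvd n}))"
    by (simp only: sum_of_bool_eq finite_lessThan)
  also have "card ({..<Suc n} \<inter> {k. 0 < n \<and> k dvd n}) = divisor_count n"
  proof (cases "n = 0")
    case False
    then have "{..<Suc n} \<inter> {k. 0 < n \<and> k dvd n} = {d. d dvd n}"
      by (auto dest: dvd_imp_le)
    then show ?thesis
      by (simp add: divisor_count_def)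
  qed (simp add: divisor_count_def)
  finally show ?thesis .
qed

lemma splits_into_multiples_eq_image:
  fixes k l n :: nat
  assumes "0 < k" "0 < l"
  shows "{0..n} \<inter> {i. (0 < i \<and> k dvd i) \<and> 0 < n - i \<and> l dvd n - i}
    = (\<lambda>(p, q). k * p) ` {(p, q). 0 < p \<and> 0 < q \<and> k * p + l * q = n}"
proof (intro set_eqI iffI)
  fix i assume "i \<in> {0..n} \<inter> {i. (0 < i \<and> k dvd i) \<and> 0 < n - i \<and> l dvd n - i}"
  then have i: "0 < i" "k dvd i" "0 < n - i" "l dvd n - i" "i \<le> n"
    by auto
  obtain p where p: "i = k * p"
    using i(2) by (rule dvdE)
  obtain q where q: "n - i = l * q"
    using i(4) by (rule dvdE)
  have "0 < p"
    using i(1) p by simp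
  moreover have "0 < q"
    using i(3) q by simp
  moreover have "k * p + l * q = n"
    using i(5) p q by linarith
  ultimately show "i \<in> (\<lambda>(p, q). k * p) ` {(p, q). 0 < p \<and> 0 < q \<and> k * p + l * q = n}"
    using p by (intro image_eqI[of _ _ "(p, q)"]) simp_all
next
  fix i assume "i \<in> (\<lambda>(p, q). k * p) ` {(p, q). 0 < p \<and> 0 < q \<and> k * p + l * q = n}"
  then obtain p q where i: "i = k * p" and "0 < p" "0 < q" and n: "k * p + l * q = n"
    by auto
  have ni: "n - i = l * q"
    using i n by simp
  have "0 < i" "0 < n - i" "i \<le> n"
    using i ni n assms \<open>0 < p\<close> \<open>0 < q\<close> by simp_all
  then show "i \<in> {0..n} \<inter> {i. (0 < i \<and> k dvd i) \<and> 0 < n - i \<and> l dvd n - i}"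
    using i ni by simp
qed

lemma fps_multiples_mult_nth:
  assumes "0 < k" "0 < l"
  shows "(fps_multiples k * fps_multiples l) $ n
    = (of_nat (card {(p, q). 0 < p \<and> 0 < q \<and> k * p + l * q = n}) :: 'a::comm_semiring_1)"
proof -
  define R where "R = {(p, q). 0 < p \<and> 0 < q \<and> k * p + l * q = n}"
  have "inj_on (\<lambda>(p, q). k * p) R"
  proof (rule inj_onI, clarify)
    fix p q p' q' assume "(p, q) \<in> R" "(p', q') \<in> R" "k * p = k * p'"
    then have "p = p'" "l * q = l * q'"
      using assms by (auto simp: R_def)
    then show "p = p' \<and> q = q'"
      using assms by simp
  qed
  have "(fps_multiples k * fps_multiples l) $ n
      = (\<Sum>i\<in>{0..n}. of_bool ((0 < i \<and> k dvd i) \<and> 0 < n - i \<and> l dvd n - i) :: 'a)"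
    unfolding fps_mult_nth fps_multiples_nth by (rule sum.cong) (simp_all add: of_bool_conj)
  also have "\<dots> = of_nat (card ({0..n} \<inter> {i. (0 < i \<and> k dvd i) \<and> 0 < n - i \<and> l dvd n - i}))"
    by (simp only: sum_of_bool_eq finite_atLeastAtMost)
  also have "\<dots> = of_nat (card ((\<lambda>(p, q). k * p) ` R))"
    unfolding R_def splits_into_multiples_eq_image[OF assms] ..
  also have "\<dots> = of_nat (card R)"
    using \<open>inj_on (\<lambda>(p, q). k * p) R\<close> by (simp only: card_image)
  finally show ?thesis
    unfolding R_def .
qed

lemma sum_fps_multiples_pairs_nth:
  "(\<Sum>l<Suc n. \<Sum>k<l. fps_multiples k * fps_multiples l) $ n
    = (of_nat (card (two_size_partitions n)) :: 'a::comm_semiring_1)"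
proof -
  define R where "R k l = {(p, q). 0 < p \<and> 0 < q \<and> k * p + l * q = n}" for k l
  have bounds: "p \<le> n" "q \<le> n" "l \<le> n" if "0 < k" "0 < l" "(p, q) \<in> R k l" for k l p q
  proof -
    have "p \<le> k * p" "q \<le> l * q" "l \<le> l * q" "k * p + l * q = n"
      using that by (auto simp: R_def)
    then show "p \<le> n" "q \<le> n" "l \<le> n"
      by linarith+
  qed
  have finite_R: "finite (R k l)" if "0 < k" "0 < l" for k l
    by (rule finite_subset[of _ "{..n} \<times> {..n}"]) (use bounds[OF that] in auto)
  have "bij_betw (\<lambda>(k, l, pq). (l, k, pq)) (two_size_partitions n)
      (SIGMA l:{..<Suc n}. SIGMA k:{0<..<l}. R k l)"
  proof (rule bij_betw_byWitness[where f' = "\<lambda>(l, k, pq). (k, l, pq)"])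
    show "(\<lambda>(k, l, pq). (l, k, pq)) ` two_size_partitions n
        \<subseteq> (SIGMA l:{..<Suc n}. SIGMA k:{0<..<l}. R k l)"
    proof (rule image_subsetI)
      fix x assume "x \<in> two_size_partitions n"
      then obtain k l p q where "x = (k, l, p, q)" "0 < k" "k < l" "(p, q) \<in> R k l"
        by (auto simp: two_size_partitions_def R_def)
      then show "(\<lambda>(k, l, pq). (l, k, pq)) x \<in> (SIGMA l:{..<Suc n}. SIGMA k:{0<..<l}. R k l)"
        using bounds(3)[of k l p q] by simp
    qed
  qed (auto simp: two_size_partitions_def R_def)
  then have "card (two_size_partitions n) = card (SIGMA l:{..<Suc n}. SIGMA k:{0<..<l}. R k l)"
    by (rule bij_betw_same_card)
  also have "\<dots> = (\<Sum>l<Suc n. card (SIGMA k:{0<..<l}. R k l))"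
    by (rule card_SigmaI) (auto intro!: finite_SigmaI finite_R)
  also have "\<dots> = (\<Sum>l<Suc n. \<Sum>k\<in>{0<..<l}. card (R k l))"
    by (intro sum.cong refl card_SigmaI) (auto intro: finite_R)
  moreover have "(\<Sum>k<l. fps_multiples k * fps_multiples l) $ n
      = (\<Sum>k\<in>{0<..<l}. of_nat (card (R k l)) :: 'a)" for l
  proof -
    have "(\<Sum>k<l. fps_multiples k * fps_multiples l :: 'a fps)
        = (\<Sum>k\<in>{0<..<l}. fps_multiples k * fps_multiples l)"
      by (rule sum.mono_neutral_right) (auto simp: fps_multiples_0)
    then show ?thesis
      by (simp add: fps_sum_nth fps_multiples_mult_nth R_def)
  qed
  ultimately show ?thesis
    by (simp add: fps_sum_nth)
qed

section \<open>The overpartition series modulo 8\<close>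

(* Modulo 8 the overpartition series is 1 + 2 overpartition_series_half: expanding
   prod_k (1 + 2 a_k) with a_k = fps_multiples k, the terms 2 a_k count divisors and the terms
   4 a_k a_l with k < l count partitions with two part sizes. *)
definition overpartition_series_half :: "'a::comm_semiring_1 fps" where
  "overpartition_series_half
    = Abs_fps (\<lambda>n. of_nat (divisor_count n + 2 * card (two_size_partitions n)))"

lemma overpartition_series_half_nth:
  "overpartition_series_half $ n = of_nat (divisor_count n + 2 * card (two_size_partitions n))"
  by (simp add: overpartition_series_half_def)

lemma overpartition_series_mod8:
  "(overpartition_series UNIV :: 8 fps) = 1 + 2 * overpartition_series_half"
proof (rule fps_ext)
  fix n
  have "overpartitions_in UNIV n = overpartitions_in {..<Suc n} n"
    using overpartitions_in_atMost[of UNIV n] by (simp only: Int_UNIV_left lessThan_Suc_atMost)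
  then have "(overpartition_series UNIV :: 8 fps) $ n = overpartition_series {..<Suc n} $ n"
    by (simp only: overpartition_series_nth)
  also have "\<dots> = (1 + 2 * (\<Sum>k<Suc n. fps_multiples k)
      + 4 * (\<Sum>l<Suc n. \<Sum>k<l. fps_multiples k * fps_multiples l)) $ n"
    by (simp only: overpartition_series_lessThan prod_one_plus_two_mod8[OF eight_fps_eq_0_mod8])
  also have "\<dots> = (1 + 2 * overpartition_series_half) $ n"
    by (simp only: fps_add_nth fps_numeral_mult_nth sum_fps_multiples_nth
        sum_fps_multiples_pairs_nth overpartition_series_half_nth) (simp add: algebra_simps)
  finally show "(overpartition_series UNIV :: 8 fps) $ n = (1 + 2 * overpartition_series_half) $ n" .
qed

lemma four_overpartition_series_half_nth:
  "4 * (overpartition_series_half :: 8 fps) $ n = 4 * of_nat (divisor_count n)"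
proof -
  have "4 * (overpartition_series_half :: 8 fps) $ n
      = 4 * of_nat (divisor_count n) + 8 * of_nat (card (two_size_partitions n))"
    by (simp add: overpartition_series_half_nth algebra_simps)
  then show ?thesis
    by simp
qed

lemma two_overpartition_series_half_nth_double:
  assumes "odd t"
  shows "2 * (overpartition_series_half :: 8 fps) $ (2 * t) = 4 * of_nat (divisor_count t)"
proof -
  obtain c where c: "card (two_size_partitions (2 * t)) = 2 * c"
    using even_card_two_size_partitions[OF assms] ..
  have "2 * (overpartition_series_half :: 8 fps) $ (2 * t)
      = 2 * of_nat (2 * divisor_count t + 2 * (2 * c))"
    by (simp only: overpartition_series_half_nth divisor_count_double[OF assms] c)
  also have "\<dots> = 4 * of_nat (divisor_count t) + 8 * of_nat c"
    by (simp add: algebra_simps)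
  finally show ?thesis
    by simp
qed

lemma two_overpartition_series_half_nth_mod8:
  assumes "N mod 8 = 6"
  shows "2 * (overpartition_series_half :: 8 fps) $ N = 0"
proof -
  define K where "K = N div 2"
  have N: "N = 2 * K" and K: "K mod 8 = 3 \<or> K mod 8 = 7"
    using assms unfolding K_def by (presburger, presburger)
  then have "odd K"
    by presburger
  have "even (divisor_count K)"
  proof (rule ccontr)
    assume "odd (divisor_count K)"
    then obtain s where "K = s * s"
      using odd_divisor_count_imp_square by blast
    with K square_mod_8[of s] show False
      by auto
  qed
  then show ?thesis
    unfolding N two_overpartition_series_half_nth_double[OF \<open>odd K\<close>]
    by (rule four_of_nat_even_mod8)
qed

lemma four_dilate_half_nth_eq_0:
  assumes "0 < e" "\<And>s. n \<noteq> e * (s * s)"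
  shows "4 * fps_dilate e (overpartition_series_half :: 8 fps) $ n = 0"
proof (cases "e dvd n")
  case True
  then obtain j where n: "n = e * j" ..
  have "even (divisor_count j)"
    using odd_divisor_count_imp_square[of j] assms(2) n by auto
  then show ?thesis
    using n assms(1) by (simp add: fps_dilate_nth four_overpartition_series_half_nth four_of_nat_even_mod8)
qed (simp add: fps_dilate_nth)

lemma four_overpartition_series_half_mult_nth:
  "4 * ((overpartition_series_half :: 8 fps) $ u * overpartition_series_half $ v)
    = 4 * of_nat (divisor_count u * divisor_count v)"
proof -
  define H where "H = (overpartition_series_half :: 8 fps)"
  have four_H: "4 * H $ j = 4 * of_nat (divisor_count j)" for j
    unfolding H_def by (rule four_overpartition_series_half_nth)
  have "4 * (H $ u * H $ v) = (4 * H $ u) * H $ v"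
    by (rule mult.assoc[symmetric])
  also have "\<dots> = (4 * of_nat (divisor_count u)) * H $ v"
    by (simp only: four_H)
  also have "\<dots> = of_nat (divisor_count u) * (4 * H $ v)"
    by (simp only: ac_simps)
  also have "\<dots> = of_nat (divisor_count u) * (4 * of_nat (divisor_count v))"
    by (simp only: four_H)
  also have "\<dots> = 4 * of_nat (divisor_count u * divisor_count v)"
    by (simp only: of_nat_mult ac_simps)
  finally show ?thesis
    unfolding H_def .
qed

lemma four_dilate_half_mult_nth_eq_0:
  fixes H :: "8 fps"
  defines "H \<equiv> overpartition_series_half"
  assumes "0 < e1" "0 < e2" "\<And>s t. n \<noteq> e1 * (s * s) + e2 * (t * t)"
  shows "4 * (fps_dilate e1 H * fps_dilate e2 H) $ n = 0"
proof -
  have "4 * (fps_dilate e1 H $ i * fps_dilate e2 H $ (n - i)) = 0" if "i \<le> n" for i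
  proof (cases "e1 dvd i \<and> e2 dvd (n - i)")
    case True
    then obtain u v where u: "i = e1 * u" and v: "n - i = e2 * v"
      by (meson dvdE)
    have "even (divisor_count u) \<or> even (divisor_count v)"
    proof (rule ccontr)
      assume "\<not> (even (divisor_count u) \<or> even (divisor_count v))"
      then obtain s t where "u = s * s" "v = t * t"
        using odd_divisor_count_imp_square by blast
      moreover have "n = i + (n - i)"
        using that by simp
      ultimately have "n = e1 * (s * s) + e2 * (t * t)"
        using u v by simp
      with assms(4) show False
        by blast
    qed
    then have "4 * (H $ u * H $ v) = 0"
      unfolding H_def four_overpartition_series_half_mult_nth by (intro four_of_nat_even_mod8) auto
    then show ?thesis
      using u v assms(2,3) by (simp add: fps_dilate_nth)
  next
    case False
    then show ?thesis
      by (auto simp: fps_dilate_nth)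
  qed
  then show ?thesis
    by (simp add: fps_mult_nth sum_distrib_left)
qed

lemma four_dilate_half_square_nth_double:
  fixes H :: "8 fps"
  defines "H \<equiv> overpartition_series_half"
  assumes "odd e" "odd K"
  shows "4 * (fps_dilate e H * fps_dilate e H) $ (2 * K) = 2 * fps_dilate e H $ (2 * K)"
proof (cases "e dvd K")
  case True
  then obtain j where K: "K = e * j" ..
  then have "odd j" "0 < e"
    using assms(2,3) by (auto intro: gr0I)
  have "4 * (fps_dilate e H * fps_dilate e H) $ (2 * K) = 4 * (H $ j * H $ j)"
    using K \<open>0 < e\<close> by (simp add: four_fps_square_nth_double fps_dilate_nth)
  also have "\<dots> = 4 * H $ j"
    by (simp add: H_def overpartition_series_half_nth four_of_nat_square_mod8 del: of_nat_add of_nat_mult)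
  also have "\<dots> = 2 * H $ (2 * j)"
    unfolding H_def
    by (simp only: four_overpartition_series_half_nth two_overpartition_series_half_nth_double[OF \<open>odd j\<close>])
  also have "\<dots> = 2 * fps_dilate e H $ (2 * K)"
    using K \<open>0 < e\<close> by (simp add: fps_dilate_nth)
  finally show ?thesis .
next
  case False
  moreover have "\<not> e dvd 2 * K"
    using False assms(2) by (simp add: coprime_dvd_mult_right_iff)
  ultimately show ?thesis
    by (simp add: four_fps_square_nth_double fps_dilate_nth)
qed

section \<open>Biregular overpartitions\<close>

lemma Bbar_mod8_expansion:
  fixes a b N :: nat and H :: "8 fps" and h :: "nat \<Rightarrow> 8 fps"
  assumes "coprime a b" "0 < a" "0 < b" "0 < N"
    and H_def: "H = overpartition_series_half" and h_def: "\<And>m. h m = fps_dilate m H"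
  shows "of_nat (Bbar a b N) = 2 * (H $ N + h (a * b) $ N - h a $ N - h b $ N)
    + 4 * ((H * h (a * b)) $ N + (H * h a) $ N + (H * h b) $ N + (h (a * b) * h a) $ N
      + (h (a * b) * h b) $ N + (h a * h b) $ N + (h a * h a) $ N + (h b * h b) $ N)"
proof -
  define G where "G = (overpartition_series {k. \<not> a dvd k \<and> \<not> b dvd k} :: 8 fps)"
  have F: "overpartition_series UNIV = 1 + 2 * H"
    unfolding H_def by (rule overpartition_series_mod8)
  have dilate: "fps_dilate m (1 + 2 * H) = 1 + 2 * h m" if "0 < m" for m
    unfolding h_def using that by (rule fps_dilate_one_plus_two)
  have "(1 + 2 * H) * (1 + 2 * h (a * b)) = G * (1 + 2 * h a) * (1 + 2 * h b)"
    using overpartition_series_biregular[OF assms(1-3), where 'a = 8]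
    unfolding F G_def by (simp only: dilate assms(2,3) mult_pos_pos)
  then have "G = 1 + 2 * (H + h (a * b) - h a - h b)
    + 4 * (H * h (a * b) + H * h a + H * h b + h (a * b) * h a + h (a * b) * h b
      + h a * h b + h a * h a + h b * h b)"
    by (intro quotient_one_plus_two_mod8[OF eight_fps_eq_0_mod8]) simp
  moreover have "G $ N = of_nat (Bbar a b N)"
    by (simp add: G_def Bbar_def biregular_overpartitions_eq)
  ultimately show ?thesis
    using assms(4) by simp
qed

lemma Bbar_mod4:
  fixes a N :: nat
  assumes "4 dvd a" "coprime a 3" "N mod 8 \<in> {2, 5, 6}"
  shows "4 dvd Bbar a 3 N"
proof -
  define H where "H = (overpartition_series_half :: 8 fps)"
  define h where "h m = fps_dilate m H" for m
  have "0 < a" "0 < N"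
    using assms by (auto intro!: gr0I)
  note expansion = Bbar_mod8_expansion[OF assms(2) \<open>0 < a\<close> zero_less_numeral \<open>0 < N\<close> H_def h_def]
  have vanish: "4 * h e $ N = 0" if "0 < e" "e mod 8 \<in> {0, 1, 3, 4}" for e
    unfolding h_def H_def using that(1) not_eq_mult_square_mod8[OF assms(3) that(2)]
    by (rule four_dilate_half_nth_eq_0)
  have "a mod 8 = 0 \<or> a mod 8 = 4" "(a * 3) mod 8 = 0 \<or> (a * 3) mod 8 = 4"
    using assms(1) by (presburger, presburger)
  then have "4 * h (a * 3) $ N = 0" "4 * h a $ N = 0" "4 * h 3 $ N = 0" "4 * H $ N = 0"
    using vanish[of "a * 3"] vanish[of a] vanish[of 3] vanish[of 1] \<open>0 < a\<close>
    by (auto simp: h_def)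
  then have vanishing: "4 * (H $ N + h (a * 3) $ N - h a $ N - h 3 $ N) = 0"
    by (simp add: algebra_simps)
  have "2 * (2 * x + 4 * y) = 4 * x" for x y :: 8
    by (simp add: algebra_simps)
  then have "(of_nat (2 * Bbar a 3 N) :: 8) = 4 * (H $ N + h (a * 3) $ N - h a $ N - h 3 $ N)"
    by (simp only: of_nat_mult of_nat_numeral expansion)
  then show ?thesis
    unfolding vanishing by (simp only: of_nat_eq_0_mod8_iff) presburger
qed

(* Here 6 is not of the form e1 s^2 + e2 t^2 modulo 8, so every cross term vanishes; the square
   of fps_dilate 3 H cancels its linear term. *)
lemma Bbar_mod8:
  fixes a N :: nat
  assumes "8 dvd a" "coprime a 3" "N mod 8 = 6"
  shows "8 dvd Bbar a 3 N"
proof -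
  define H where "H = (overpartition_series_half :: 8 fps)"
  define h where "h m = fps_dilate m H" for m
  have "0 < a" "0 < N"
    using assms by (auto intro!: gr0I)
  note expansion = Bbar_mod8_expansion[OF assms(2) \<open>0 < a\<close> zero_less_numeral \<open>0 < N\<close> H_def h_def]
  have residues: "a mod 8 = 0" "(a * 3) mod 8 = 0"
    using assms(1) by (presburger, presburger)
  have pair: "4 * (fps_dilate e1 H * fps_dilate e2 H) $ N = 0"
    if "0 < e1" "0 < e2" "e1 mod 8 \<in> {0, 1}" "e2 mod 8 \<in> {0, 3}" for e1 e2
    unfolding H_def using that(1,2) not_eq_mult_squares_add_mod8[OF assms(3) that(3,4)]
    by (rule four_dilate_half_mult_nth_eq_0)
  have "4 * (H * h (a * 3)) $ N = 0" "4 * (H * h a) $ N = 0" "4 * (H * h 3) $ N = 0"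
    "4 * (h (a * 3) * h a) $ N = 0" "4 * (h (a * 3) * h 3) $ N = 0" "4 * (h a * h 3) $ N = 0"
    "4 * (h a * h a) $ N = 0"
    using pair[of 1 "a * 3"] pair[of 1 a] pair[of 1 3] pair[of "a * 3" a] pair[of "a * 3" 3]
      pair[of a 3] pair[of a a] residues \<open>0 < a\<close>
    by (simp_all add: h_def)
  moreover have "\<not> a dvd N" "\<not> a * 3 dvd N"
    using assms(1,3) by (auto dest: dvd_trans dvd_mult_left)
  then have "h a $ N = 0" "h (a * 3) $ N = 0"
    by (simp_all add: h_def fps_dilate_nth)
  moreover have "2 * H $ N = 0"
    unfolding H_def using assms(3) by (rule two_overpartition_series_half_nth_mod8)
  moreover obtain K where N: "N = 2 * K" and "odd K"
  proof -
    have "N = 2 * (N div 2)" "odd (N div 2)"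
      using assms(3) by (presburger, presburger)
    then show thesis
      using that by blast
  qed
  have "4 * (h 3 * h 3) $ N = 2 * h 3 $ N"
    unfolding h_def H_def N by (rule four_dilate_half_square_nth_double) (use \<open>odd K\<close> in auto)
  ultimately have "(of_nat (Bbar a 3 N) :: 8) = 0"
    unfolding expansion by (simp add: distrib_left right_diff_distrib)
  then show ?thesis
    by (simp only: of_nat_eq_0_mod8_iff)
qed

theorem theorem1:
  fixes n \<alpha> :: nat
  shows "(2 \<le> \<alpha> \<longrightarrow> Bbar (2 ^ \<alpha>) 3 (4 * n + 2) mod 4 = 0 \<and> Bbar (2 ^ \<alpha>) 3 (8 * n + 5) mod 4 = 0)
       \<and> (3 \<le> \<alpha> \<longrightarrow> Bbar (2 ^ \<alpha>) 3 (8 * n + 6) mod 8 = 0)"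
proof (intro conjI impI)
  have coprime: "coprime ((2::nat) ^ \<alpha>) 3"
    by simp
  assume "2 \<le> \<alpha>"
  then have "4 dvd (2::nat) ^ \<alpha>"
    using le_imp_power_dvd[of 2 \<alpha> 2] by simp
  note mod4 = Bbar_mod4[OF this coprime]
  have "(4 * n + 2) mod 8 = 2 \<or> (4 * n + 2) mod 8 = 6"
    by presburger
  then show "Bbar (2 ^ \<alpha>) 3 (4 * n + 2) mod 4 = 0"
    using mod4[of "4 * n + 2"] by auto
  show "Bbar (2 ^ \<alpha>) 3 (8 * n + 5) mod 4 = 0"
    using mod4[of "8 * n + 5"] by simp
next
  assume "3 \<le> \<alpha>"
  then have "8 dvd (2::nat) ^ \<alpha>"
    using le_imp_power_dvd[of 3 \<alpha> 2] by simp
  then show "Bbar (2 ^ \<alpha>) 3 (8 * n + 6) mod 8 = 0"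
    using Bbar_mod8[of "2 ^ \<alpha>" "8 * n + 6"] by simp
qed

end
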